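(* Let $N\ge 2$ and $d\ge 1$ be integers, $[N]=\{1,\dots,N\}$, and let $0\le\sigma\le\tau$. Let $\psi:[0,\infty)\to[0,\infty)$ be continuous, nonincreasing, with $\psi(s)>0$ for all $s\ge0$ and $\sup_{s\ge0}\psi(s)\le1$. Let $x_i^0\in C^1([-\tau,0],\mathbb{R}^d)$, $v_i^0\in C([-\tau,0],\mathbb{R}^d)$ with $\frac{\mathrm d}{\mathrm dt}x_i^0=v_i^0$ on $[-\tau,0]$, $i\in[N]$, and let $\{x_i,v_i\}_{i\in[N]}$ be the global solution of \[ \dot x_i(t)=v_i(t),\qquad \dot v_i(t)=\sum_{j\ne i}a_{ij}(t)\big(v_j(t-\tau)-v_i(t-\sigma)\big),\quad t>0, \] with $a_{ij}(t)=\frac{1}{N-1}\psi(|x_i(t-\sigma)-x_j(t-\tau)|)$ and $x_i=x_i^0$, $v_i=v_i^0$ on $[-\tau,0]$. Let $K$ be the smallest integer with $K\sigma\ge2\tau$. Assume there exists $\beta>0$ with \[ 4\tau\le\beta\left(2e^{-2\tau}-1\right) \] and $C>0$ with \[ e^{C\tau}\big(4\tau e^{C\tau}+\beta(1-e^{-2\tau})\big)+C\le\psi\Big(\Delta^0_x+\mathcal{W}^K_\sigma\Delta^0_v+\frac{e^{C\tau}}{C}\big(1+\beta^{-1}e^{2\tau+C\sigma}+e^{C\tau}(\tau-\sigma)\big)\mathcal{Z}^K_\sigma\Delta^0_v\Big), \] where $\mathcal{Z}^K_\sigma:=Z^K_\sigma+Z^{K-1}_\sigma\beta\big(1-(1+2\tau)e^{-2\tau}\big)$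 and $\mathcal{W}^K_\sigma:=Z^K_\sigma-(1+\sigma)(Z^{K-1}_\sigma+1)$. Then the solution exhibits asymptotic flocking, i.e. $\sup_{t\ge0}d_x(t)<\infty$ and $\lim_{t\to\infty}d_v(t)=0$, and $d_v(t)$ decays exponentially in time with rate $C$.
   Context: $d_x(t):=\max_{i,j}|x_i(t)-x_j(t)|$, $d_v(t):=\max_{i,j}|v_i(t)-v_j(t)|$ for $t\ge0$. $\Delta^0_x:=\max_{i,j}\max_{s,t\in[-\tau,0]}|x_i^0(s)-x_j^0(t)|$, $\Delta^0_v:=\max_{i,j}\max_{s,t\in[-\tau,0]}|v_i^0(s)-v_j^0(t)|$. For $k\ge0$, \[ Z^k_\sigma:=\frac{1}{2\sqrt{\sigma(1+\sigma)}}\Big[\big((1+\sigma)+\sqrt{\sigma(1+\sigma)}\big)^{k+1}-\big((1+\sigma)-\sqrt{\sigma(1+\sigma)}\big)^{k+1}\Big], \] a polynomial in $\sigma$; equivalently $Z^0_\sigma=1$, $Z^k_\sigma=1+(1+\sigma)Z^{k-1}_\sigma+\sigma\sum_{m=0}^{k-1}Z^m_\sigma$ for $k\ge1$. "Decays exponentially with rate $C$" means there is a constant $A>0$ with $d_v(t)\le Ae^{-Ct}$ for all $t\ge0$. *)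

theory Defs
  imports "HOL-Analysis.Analysis"
begin

text \<open>Z^k_sigma via the closed formula (sigma > 0 in the theorem, so no division by zero).\<close>
definition Zs :: "real \<Rightarrow> nat \<Rightarrow> real" where
  "Zs \<sigma> k = (1 / (2 * sqrt (\<sigma> * (1 + \<sigma>)))) *
      (((1 + \<sigma>) + sqrt (\<sigma> * (1 + \<sigma>))) ^ (k + 1)
     - ((1 + \<sigma>) - sqrt (\<sigma> * (1 + \<sigma>))) ^ (k + 1))"

text \<open>Diameters. Agents are indexed by 0..N-1.\<close>
definition dX :: "nat \<Rightarrow> (nat \<Rightarrow> real \<Rightarrow> real ^ 'd) \<Rightarrow> real \<Rightarrow> real" where
  "dX N x t = Max {norm (x i t - x j t) | i j. i < N \<and> j < N}"

definition Delta0 :: "nat \<Rightarrow> real \<Rightarrow> (nat \<Rightarrow> real \<Rightarrow> real ^ 'd) \<Rightarrow> real" where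
  "Delta0 N \<tau> x0 = (SUP p \<in> {(i, j, s, t). i < N \<and> j < N \<and> s \<in> {-\<tau>..0} \<and> t \<in> {-\<tau>..0}}.
        (case p of (i, j, s, t) \<Rightarrow> norm (x0 i s - x0 j t)))"

end

(*
  The velocity diameter is trapped below the barrier b t = B exp (-C t), and simultaneously
  every acceleration below G b t, by continuous induction on the first time one of these
  bounds fails. While both hold, positions drift by at most the integral of the barrier, so all
  (delayed) position gaps stay below a fixed P and every weight a_ij is at least psi P / (N - 1).
  At a time t > tau where a pair (i, k) realises the diameter b t, this coercivity makes
  |v_i - v_k|^2 decrease strictly faster than b^2, which is impossible at a first touching time.
  The acceleration bound survives the delays because 1 + (tau - sigma) G = G exp (-C tau).
  Since psi <= 1, the hypothesis of the theorem forces tau < 1/4 and C < 1, and then yields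
  B and P with the required inequalities; of the coefficients Z_sigma^k only Z_sigma^K >= 3
  and the nonnegativity of the others enter.
*)
theory Submission
  imports Defs
begin

lemma power_Suc_Suc_Suc_recurrence:
  fixes r a :: real
  assumes "r\<^sup>2 = 2 * a * r - a"
  shows "r ^ Suc (Suc (Suc k)) = 2 * a * r ^ Suc (Suc k) - a * r ^ Suc k"
proof -
  have "r ^ Suc (Suc (Suc k)) = r ^ Suc k * r\<^sup>2"
    by (simp add: power2_eq_square)
  also have "\<dots> = 2 * a * r ^ Suc (Suc k) - a * r ^ Suc k"
    unfolding assms by (simp add: algebra_simps)
  finally show ?thesis .
qed

lemma Zs_Suc_Suc:
  assumes "\<sigma> > 0"
  shows "Zs \<sigma> (Suc (Suc k)) = 2 * (1 + \<sigma>) * Zs \<sigma> (Suc k) - (1 + \<sigma>) * Zs \<sigma> k"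
proof -
  define s where "s = sqrt (\<sigma> * (1 + \<sigma>))"
  define c where "c = 1 / (2 * s)"
  define p where "p = 1 + \<sigma> + s"
  define q where "q = 1 + \<sigma> - s"
  have s2: "s * s = \<sigma> * (1 + \<sigma>)"
    using assms by (simp add: s_def)
  have "p\<^sup>2 - (2 * (1 + \<sigma>) * p - (1 + \<sigma>)) = s * s - \<sigma> * (1 + \<sigma>)"
    "q\<^sup>2 - (2 * (1 + \<sigma>) * q - (1 + \<sigma>)) = s * s - \<sigma> * (1 + \<sigma>)"
    unfolding p_def q_def by (simp_all add: power2_eq_square algebra_simps)
  then have "p\<^sup>2 = 2 * (1 + \<sigma>) * p - (1 + \<sigma>)" "q\<^sup>2 = 2 * (1 + \<sigma>) * q - (1 + \<sigma>)"
    using s2 by simp_all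
  note rec = this[THEN power_Suc_Suc_Suc_recurrence, of k]
  have lin: "c * (P3 - Q3) = 2 * a * (c * (P2 - Q2)) - a * (c * (P1 - Q1))"
    if "P3 = 2 * a * P2 - a * P1" "Q3 = 2 * a * Q2 - a * Q1" for a P1 P2 P3 Q1 Q2 Q3 :: real
    unfolding that by (simp add: algebra_simps)
  have Z: "Zs \<sigma> n = c * (p ^ Suc n - q ^ Suc n)" for n
    unfolding Zs_def c_def p_def q_def s_def by simp
  show ?thesis
    unfolding Z by (rule lin[OF rec])
qed

lemma Zs_0: "\<sigma> > 0 \<Longrightarrow> Zs \<sigma> 0 = 1"
  by (simp add: Zs_def)

lemma Zs_1: "\<sigma> > 0 \<Longrightarrow> Zs \<sigma> (Suc 0) = 2 * (1 + \<sigma>)"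
proof -
  assume "\<sigma> > 0"
  then have "sqrt (\<sigma> * (1 + \<sigma>)) > 0" by simp
  then show ?thesis by (simp add: Zs_def power2_eq_square field_simps)
qed

lemma Zs_growth:
  assumes "\<sigma> > 0"
  shows "1 \<le> Zs \<sigma> (Suc k) - Zs \<sigma> k \<and> real k + 1 \<le> Zs \<sigma> k"
proof (induction k)
  case 0
  then show ?case using assms by (simp add: Zs_0 Zs_1)
next
  case (Suc k)
  have "Zs \<sigma> (Suc (Suc k)) - Zs \<sigma> (Suc k) = (1 + \<sigma>) * (Zs \<sigma> (Suc k) - Zs \<sigma> k) + \<sigma> * Zs \<sigma> (Suc k)"
    using Zs_Suc_Suc[OF assms, of k] by (simp add: algebra_simps)
  moreover have "1 * 1 \<le> (1 + \<sigma>) * (Zs \<sigma> (Suc k) - Zs \<sigma> k)"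
    using Suc assms by (intro mult_mono) auto
  moreover have "0 \<le> \<sigma> * Zs \<sigma> (Suc k)"
    using Suc assms by simp
  ultimately have "1 \<le> Zs \<sigma> (Suc (Suc k)) - Zs \<sigma> (Suc k)"
    by linarith
  moreover have "real (Suc k) + 1 \<le> Zs \<sigma> (Suc k)"
    using Suc by simp
  ultimately show ?case ..
qed

lemma Zs_coefficient_bounds:
  assumes "\<sigma> > 0" "2 \<le> K"
  shows "3 \<le> Zs \<sigma> K" and "0 \<le> Zs \<sigma> (K - 1)"
    and "0 \<le> Zs \<sigma> K - (1 + \<sigma>) * (Zs \<sigma> (K - 1) + 1)"
proof -
  obtain m where K: "K = Suc (Suc m)"
    using assms(2) by (cases K; cases "K - 1") auto
  show "3 \<le> Zs \<sigma> K"
    using Zs_growth[OF assms(1), of K] by (simp add: K)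
  show "0 \<le> Zs \<sigma> (K - 1)"
    using Zs_growth[OF assms(1), of "K - 1"] by (simp add: K)
  have "0 \<le> (1 + \<sigma>) * (Zs \<sigma> (Suc m) - Zs \<sigma> m - 1)"
    using Zs_growth[OF assms(1), of m] assms(1) by simp
  also have "\<dots> = Zs \<sigma> K - (1 + \<sigma>) * (Zs \<sigma> (K - 1) + 1)"
    using Zs_Suc_Suc[OF assms(1), of m] by (simp add: K algebra_simps)
  finally show "0 \<le> Zs \<sigma> K - (1 + \<sigma>) * (Zs \<sigma> (K - 1) + 1)" .
qed

lemma two_le_Least_mult_ge:
  fixes \<sigma> \<tau> :: real
  assumes "0 < \<sigma>" "\<sigma> \<le> \<tau>"
  shows "2 \<le> (LEAST k::nat. 2 * \<tau> \<le> real k * \<sigma>)" (is "2 \<le> ?K")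
proof (rule ccontr)
  assume "\<not> 2 \<le> ?K"
  then have "real ?K * \<sigma> \<le> 1 * \<sigma>"
    using assms by (intro mult_right_mono) auto
  moreover obtain n :: nat where "2 * \<tau> < real n * \<sigma>"
    using reals_Archimedean3[OF assms(1)] by blast
  then have "2 * \<tau> \<le> real ?K * \<sigma>"
    using LeastI[of "\<lambda>k::nat. 2 * \<tau> \<le> real k * \<sigma>" n] by simp
  ultimately show False
    using assms by linarith
qed

lemma continuous_on_le_0_of_less_0_before:
  fixes g :: "real \<Rightarrow> real"
  assumes "continuous_on {0..} g" "0 < t" "\<And>s. 0 \<le> s \<Longrightarrow> s < t \<Longrightarrow> g s < 0"
  shows "g t \<le> 0"
proof -
  have "(g \<longlongrightarrow> g t) (at t within {0..})"
    using assms(1,2) by (auto simp: continuous_on_def)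
  then have "(g \<longlongrightarrow> g t) (at t within {0..t})"
    by (rule tendsto_within_subset) auto
  then have "(g \<longlongrightarrow> g t) (at_left t)"
    using at_within_Icc_at_left[OF assms(2)] by simp
  moreover have "eventually (\<lambda>s. g s \<le> 0) (at_left t)"
    unfolding eventually_at_left_field using assms(2,3)
    by (intro exI[of _ 0]) (auto intro: less_imp_le)
  ultimately show ?thesis
    using tendsto_upperbound trivial_limit_at_left_real by blast
qed

lemma eventually_at_right_all_less_0:
  fixes f :: "'k \<Rightarrow> real \<Rightarrow> real"
  assumes "finite I" "\<And>k. k \<in> I \<Longrightarrow> continuous_on {0..} (f k)" "0 \<le> t" "\<forall>k\<in>I. f k t < 0"
  shows "eventually (\<lambda>s. \<forall>k\<in>I. f k s < 0) (at_right t)"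
proof (rule eventually_ball_finite[OF assms(1)], rule ballI)
  fix k assume k: "k \<in> I"
  have "(f k \<longlongrightarrow> f k t) (at t within {0..})"
    using assms(2)[OF k] assms(3) by (auto simp: continuous_on_def)
  then have "(f k \<longlongrightarrow> f k t) (at_right t)"
    by (rule tendsto_within_subset) (use assms(3) in auto)
  then show "eventually (\<lambda>s. f k s < 0) (at_right t)"
    using assms(4) k by (auto intro: order_tendstoD(2))
qed

lemma continuous_induction_negative:
  fixes f :: "'k \<Rightarrow> real \<Rightarrow> real"
  assumes fin: "finite I" and cont: "\<And>k. k \<in> I \<Longrightarrow> continuous_on {0..} (f k)"
    and step: "\<And>t. 0 \<le> t \<Longrightarrow> (\<And>s k. 0 \<le> s \<Longrightarrow> s < t \<Longrightarrow> k \<in> I \<Longrightarrow> f k s < 0) \<Longrightarrow>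
        (\<And>k. 0 < t \<Longrightarrow> k \<in> I \<Longrightarrow> f k t \<le> 0) \<Longrightarrow> \<forall>k\<in>I. f k t < 0"
  assumes "0 \<le> t" "k \<in> I"
  shows "f k t < 0"
proof (rule ccontr)
  assume "\<not> f k t < 0"
  define S where "S = {t. 0 \<le> t \<and> (\<exists>k\<in>I. 0 \<le> f k t)}"
  have ne: "S \<noteq> {}" and bdd: "bdd_below S"
    using \<open>\<not> f k t < 0\<close> assms(4,5) by (auto simp: S_def not_less intro: bdd_belowI[of _ 0])
  define t0 where "t0 = Inf S"
  have t0: "0 \<le> t0"
    unfolding t0_def using ne by (intro cInf_greatest) (auto simp: S_def)
  have below: "f k s < 0" if "0 \<le> s" "s < t0" "k \<in> I" for s k
  proof (rule ccontr)
    assume "\<not> f k s < 0"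
    then have "t0 \<le> s"
      unfolding t0_def using that bdd by (intro cInf_lower) (auto simp: S_def not_less)
    with that show False by simp
  qed
  have "f k t0 \<le> 0" if "0 < t0" "k \<in> I" for k
    using continuous_on_le_0_of_less_0_before[OF cont[OF that(2)] that(1) below[OF _ _ that(2)]] .
  with below have at_t0: "\<forall>k\<in>I. f k t0 < 0"
    by (intro step[OF t0])
  have "eventually (\<lambda>s. \<forall>k\<in>I. f k s < 0) (at_right t0)"
    using fin cont t0 at_t0 by (rule eventually_at_right_all_less_0)
  then obtain b where b: "t0 < b" "\<And>s. t0 < s \<Longrightarrow> s < b \<Longrightarrow> \<forall>k\<in>I. f k s < 0"
    by (auto simp: eventually_at_right_field)
  have "b \<le> t0"
    unfolding t0_def
  proof (rule cInf_greatest[OF ne])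
    fix s assume s: "s \<in> S"
    then have "t0 \<le> s"
      unfolding t0_def using bdd by (rule cInf_lower)
    show "b \<le> s"
    proof (rule ccontr)
      assume "\<not> b \<le> s"
      then have "\<forall>k\<in>I. f k s < 0"
        using at_t0 b(2)[of s] \<open>t0 \<le> s\<close> by (cases "s = t0") auto
      with s show False
        by (auto simp: S_def not_less)
    qed
  qed
  with b(1) show False by simp
qed

lemma mvt_norm_le:
  fixes f :: "real \<Rightarrow> 'a::real_normed_vector"
  assumes "a \<le> b" "continuous_on {a..b} f"
    and "\<And>s. a < s \<Longrightarrow> s < b \<Longrightarrow> (f has_vector_derivative f' s) (at s)"
    and "\<And>s. a < s \<Longrightarrow> s < b \<Longrightarrow> norm (f' s) \<le> M"
  shows "norm (f b - f a) \<le> M * (b - a)"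
proof (cases "a = b")
  case False
  have "((\<lambda>s. M * s) has_vector_derivative M) (at s)" for s
    by (auto intro!: derivative_eq_intros simp flip: has_real_derivative_iff_has_vector_derivative)
  with False assms have "norm (f b - f a) \<le> M * b - M * a"
    by (intro differentiable_bound_general[where \<phi>="\<lambda>s. M * s" and \<phi>'="\<lambda>_. M"])
       (auto intro!: continuous_intros)
  then show ?thesis by (simp add: algebra_simps)
qed simp

lemma mvt_norm_le_exp:
  fixes f :: "real \<Rightarrow> 'a::real_normed_vector"
  assumes "a \<le> b" "C > 0" "H \<ge> 0" "continuous_on {a..b} f"
    and "\<And>s. a < s \<Longrightarrow> s < b \<Longrightarrow> (f has_vector_derivative f' s) (at s)"
    and "\<And>s. a < s \<Longrightarrow> s < b \<Longrightarrow> norm (f' s) \<le> H * exp (- C * s)"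
  shows "norm (f b - f a) \<le> H / C * exp (- C * a)"
proof (cases "a = b")
  case False
  have "((\<lambda>s. - (H / C) * exp (- C * s)) has_vector_derivative H * exp (- C * s)) (at s)" for s
    using assms(2)
    by (auto intro!: derivative_eq_intros simp flip: has_real_derivative_iff_has_vector_derivative)
  with False assms have "norm (f b - f a) \<le> - (H / C) * exp (- C * b) - - (H / C) * exp (- C * a)"
    by (intro differentiable_bound_general[where \<phi>="\<lambda>s. - (H / C) * exp (- C * s)"])
       (auto intro!: continuous_intros)
  also have "\<dots> \<le> H / C * exp (- C * a)"
    using assms(2,3) by simp
  finally show ?thesis .
qed (use assms in simp)

lemma has_vector_derivative_at_shift:
  assumes "(f has_vector_derivative f') (at (s - l))"
  shows "((\<lambda>s. f (s - l)) has_vector_derivative f') (at s)"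
proof -
  have "((\<lambda>s. s - l) has_vector_derivative 1) (at s)"
    by (auto intro!: derivative_eq_intros simp flip: has_real_derivative_iff_has_vector_derivative)
  from vector_diff_chain_at[OF this] assms show ?thesis
    by (simp add: o_def)
qed

lemma continuous_on_shift:
  fixes f :: "real \<Rightarrow> 'a::topological_space"
  assumes "continuous_on {-\<tau>..} f" "c \<le> \<tau>"
  shows "continuous_on {0..} (\<lambda>t. f (t - c))"
  by (rule continuous_on_compose2[OF assms(1)]) (use assms in \<open>auto intro!: continuous_intros\<close>)

text \<open>In the application \<open>p j\<close> and \<open>qi\<close> are the delayed velocities \<open>v j (t - \<tau>)\<close> and
  \<open>v i (t - \<sigma>)\<close>, and \<open>u j\<close>, \<open>ui\<close> the current ones.\<close>

lemma inner_delayed_alignment_le: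
  fixes w ui qi :: "'a::real_inner" and u p :: "'j \<Rightarrow> 'a"
  assumes "finite A" and al: "\<And>j. j \<in> A \<Longrightarrow> m \<le> \<alpha> j" and "0 \<le> m"
    and sum_le: "(\<Sum>j\<in>A. \<alpha> j) \<le> 1"
    and behind: "\<And>j. j \<in> A \<Longrightarrow> w \<bullet> (u j - ui) \<le> 0"
    and dp: "\<And>j. j \<in> A \<Longrightarrow> norm (p j - u j) \<le> \<rho>1"
    and dq: "norm (ui - qi) \<le> \<rho>2" and "0 \<le> \<rho>1"
  shows "w \<bullet> (\<Sum>j\<in>A. \<alpha> j *\<^sub>R (p j - qi)) \<le> m * (\<Sum>j\<in>A. w \<bullet> (u j - ui)) + norm w * (\<rho>1 + \<rho>2)"
proof -
  have "0 \<le> \<rho>2"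
    using dq norm_ge_zero order_trans by blast
  then have \<rho>: "0 \<le> norm w * (\<rho>1 + \<rho>2)"
    using \<open>0 \<le> \<rho>1\<close> by simp
  have each: "\<alpha> j * (w \<bullet> (p j - qi)) \<le> m * (w \<bullet> (u j - ui)) + \<alpha> j * (norm w * (\<rho>1 + \<rho>2))"
    if j: "j \<in> A" for j
  proof -
    have "w \<bullet> (p j - u j) \<le> norm w * \<rho>1"
      using norm_cauchy_schwarz[of w "p j - u j"] dp[OF j]
      by (meson mult_left_mono norm_ge_zero order_trans)
    moreover have "w \<bullet> (ui - qi) \<le> norm w * \<rho>2"
      using norm_cauchy_schwarz[of w "ui - qi"] dq
      by (meson mult_left_mono norm_ge_zero order_trans)
    moreover have "w \<bullet> (p j - qi) = w \<bullet> (u j - ui) + w \<bullet> (p j - u j) + w \<bullet> (ui - qi)"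
      by (simp add: inner_diff_right)
    ultimately have "w \<bullet> (p j - qi) \<le> w \<bullet> (u j - ui) + norm w * (\<rho>1 + \<rho>2)"
      by (simp add: distrib_left)
    then have "\<alpha> j * (w \<bullet> (p j - qi)) \<le> \<alpha> j * (w \<bullet> (u j - ui)) + \<alpha> j * (norm w * (\<rho>1 + \<rho>2))"
      using al[OF j] \<open>0 \<le> m\<close> by (metis distrib_left mult_left_mono order_trans)
    moreover have "\<alpha> j * (w \<bullet> (u j - ui)) \<le> m * (w \<bullet> (u j - ui))"
      using mult_right_mono_neg[OF al[OF j] behind[OF j]] .
    ultimately show ?thesis by linarith
  qed
  have "w \<bullet> (\<Sum>j\<in>A. \<alpha> j *\<^sub>R (p j - qi)) = (\<Sum>j\<in>A. \<alpha> j * (w \<bullet> (p j - qi)))"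
    by (simp add: inner_sum_right)
  also have "\<dots> \<le> (\<Sum>j\<in>A. m * (w \<bullet> (u j - ui)) + \<alpha> j * (norm w * (\<rho>1 + \<rho>2)))"
    by (rule sum_mono) (rule each)
  also have "\<dots> = m * (\<Sum>j\<in>A. w \<bullet> (u j - ui)) + (\<Sum>j\<in>A. \<alpha> j) * (norm w * (\<rho>1 + \<rho>2))"
    by (simp add: sum.distrib sum_distrib_left sum_distrib_right)
  also have "\<dots> \<le> m * (\<Sum>j\<in>A. w \<bullet> (u j - ui)) + norm w * (\<rho>1 + \<rho>2)"
    using mult_right_mono[OF sum_le \<rho>] by simp
  finally show ?thesis .
qed

lemma inner_diameter_le_0:
  fixes u :: "'j \<Rightarrow> 'a::real_inner"
  assumes diam: "\<And>j l. j \<in> A \<Longrightarrow> l \<in> A \<Longrightarrow> norm (u j - u l) \<le> norm (u i - u k)"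
    and "j \<in> A" "k \<in> A"
  shows "(u i - u k) \<bullet> (u j - u i) \<le> 0"
proof -
  have "(u i - u k) \<bullet> (u j - u k) \<le> norm (u i - u k) * norm (u j - u k)"
    by (rule norm_cauchy_schwarz)
  also have "\<dots> \<le> norm (u i - u k) * norm (u i - u k)"
    using diam[OF assms(2,3)] by (simp add: mult_left_mono)
  also have "\<dots> = (u i - u k) \<bullet> (u i - u k)"
    by (simp flip: power2_norm_eq_inner add: power2_eq_square)
  finally show ?thesis
    by (simp add: inner_diff_right)
qed

lemma norm_le_Delta0:
  fixes y :: "nat \<Rightarrow> real \<Rightarrow> real ^ 'd"
  assumes cont: "\<And>i. i < N \<Longrightarrow> continuous_on {-\<tau>..0} (y i)"
    and "i < N" "j < N" "s \<in> {-\<tau>..0}" "t \<in> {-\<tau>..0}"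
  shows "norm (y i s - y j t) \<le> Delta0 N \<tau> y"
proof -
  have "bounded (\<Union>i<N. y i ` {-\<tau>..0})"
    using cont by (intro bounded_UN ballI compact_imp_bounded compact_continuous_image) auto
  then obtain M where M: "\<And>i s. i < N \<Longrightarrow> s \<in> {-\<tau>..0} \<Longrightarrow> norm (y i s) \<le> M"
    unfolding bounded_iff by blast
  define S where "S = {(i, j, s, t). i < N \<and> j < N \<and> s \<in> {-\<tau>..0} \<and> t \<in> {-\<tau>..0}}"
  define f where "f = (\<lambda>(i, j, s, t). norm (y i s - y j t))"
  have "bdd_above (f ` S)"
  proof (rule bdd_aboveI2)
    fix p assume "p \<in> S"
    then obtain i j s t where "p = (i, j, s, t)" "i < N" "j < N" "s \<in> {-\<tau>..0}" "t \<in> {-\<tau>..0}"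
      unfolding S_def by auto
    then show "f p \<le> M + M"
      unfolding f_def using norm_triangle_ineq4[of "y i s" "y j t"] M[of i s] M[of j t] by simp
  qed
  moreover have "(i, j, s, t) \<in> S"
    unfolding S_def using assms by simp
  ultimately have "f (i, j, s, t) \<le> (SUP p\<in>S. f p)"
    by (intro cSUP_upper)
  then show ?thesis
    by (simp add: Delta0_def S_def f_def)
qed

lemma Delta0_cong:
  assumes "\<And>i t. i < N \<Longrightarrow> t \<in> {-\<tau>..0} \<Longrightarrow> y i t = z i t"
  shows "Delta0 N \<tau> y = Delta0 N \<tau> z"
  unfolding Delta0_def using assms by (intro SUP_cong) auto

lemma dX_eq_Max_image: "dX N y t = Max ((\<lambda>(i, j). norm (y i t - y j t)) ` ({..<N} \<times> {..<N}))"
  unfolding dX_def by (rule arg_cong[where f = Max]) auto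

lemma dX_le:
  assumes "0 < N" "\<And>i j. i < N \<Longrightarrow> j < N \<Longrightarrow> norm (y i t - y j t) \<le> M"
  shows "dX N y t \<le> M"
  unfolding dX_eq_Max_image using assms by (subst Max_le_iff) auto

lemma dX_nonneg: "0 < N \<Longrightarrow> 0 \<le> dX N y t"
  unfolding dX_eq_Max_image by (subst Max_ge_iff) auto

locale delayed_cucker_smale =
  fixes N :: nat and \<sigma> \<tau> :: real and \<psi> :: "real \<Rightarrow> real"
    and x v :: "nat \<Rightarrow> real \<Rightarrow> real ^ 'd"
  assumes N: "N \<ge> 2"
    and sig: "0 < \<sigma>" "\<sigma> \<le> \<tau>"
    and psi_cont: "continuous_on {0..} \<psi>"
    and psi_mono: "\<And>s t. 0 \<le> s \<Longrightarrow> s \<le> t \<Longrightarrow> \<psi> t \<le> \<psi> s"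
    and psi_pos: "\<And>s. 0 \<le> s \<Longrightarrow> \<psi> s > 0"
    and psi_le1: "\<And>s. 0 \<le> s \<Longrightarrow> \<psi> s \<le> 1"
    and x_deriv: "\<And>i t. i < N \<Longrightarrow> t \<ge> -\<tau> \<Longrightarrow>
                     (x i has_vector_derivative v i t) (at t within {-\<tau>..})"
    and v_cont: "\<And>i. i < N \<Longrightarrow> continuous_on {-\<tau>..} (v i)"
    and v_deriv: "\<And>i t. i < N \<Longrightarrow> t > 0 \<Longrightarrow>
                     (v i has_vector_derivative
                        (\<Sum>j\<in>{..<N} - {i}.
                           (\<psi> (norm (x i (t - \<sigma>) - x j (t - \<tau>))) / real (N - 1))
                             *\<^sub>R (v j (t - \<tau>) - v i (t - \<sigma>)))) (at t)"
begin

abbreviation "Dx \<equiv> Delta0 N \<tau> x"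
abbreviation "Dv \<equiv> Delta0 N \<tau> v"

definition a where "a i j t = \<psi> (norm (x i (t - \<sigma>) - x j (t - \<tau>))) / real (N - 1)"
definition F where "F i t = (\<Sum>j\<in>{..<N} - {i}. a i j t *\<^sub>R (v j (t - \<tau>) - v i (t - \<sigma>)))"

lemma tau_pos: "\<tau> > 0"
  using sig by simp

lemma N_minus_1_pos: "real (N - 1) > 0"
  using N by simp

lemma a_pos: "a i j t > 0"
  unfolding a_def using psi_pos N_minus_1_pos by simp

lemma a_le: "a i j t \<le> 1 / real (N - 1)"
  unfolding a_def using psi_le1 N_minus_1_pos by (simp add: divide_right_mono)

lemma a_ge:
  "norm (x i (t - \<sigma>) - x j (t - \<tau>)) \<le> P \<Longrightarrow> \<psi> P / real (N - 1) \<le> a i j t"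
  unfolding a_def using psi_mono N_minus_1_pos by (simp add: divide_right_mono)

lemma others_nonempty: "{..<N} - {i} \<noteq> {}"
proof -
  have "(if i = 0 then 1 else 0) \<in> {..<N} - {i}"
    using N by auto
  then show ?thesis by blast
qed

lemma sum_a_le_1: "i < N \<Longrightarrow> (\<Sum>j\<in>{..<N} - {i}. a i j t) \<le> 1"
proof -
  assume "i < N"
  have "(\<Sum>j\<in>{..<N} - {i}. a i j t) \<le> (\<Sum>j\<in>{..<N} - {i}. 1 / real (N - 1))"
    by (rule sum_mono) (rule a_le)
  also have "\<dots> = 1"
    using \<open>i < N\<close> N_minus_1_pos by simp
  finally show ?thesis .
qed

lemma v_has_derivative_F: "i < N \<Longrightarrow> t > 0 \<Longrightarrow> (v i has_vector_derivative F i t) (at t)"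
  unfolding F_def a_def by (rule v_deriv)

lemma norm_F_le_sum:
  "norm (F i t) \<le> (\<Sum>j\<in>{..<N} - {i}. a i j t * norm (v j (t - \<tau>) - v i (t - \<sigma>)))"
proof -
  have "norm (F i t) \<le> (\<Sum>j\<in>{..<N} - {i}. norm (a i j t *\<^sub>R (v j (t - \<tau>) - v i (t - \<sigma>))))"
    unfolding F_def by (rule norm_sum)
  then show ?thesis
    using a_pos by (simp add: less_imp_le)
qed

lemma norm_F_le:
  assumes "i < N" "0 \<le> M"
    and "\<And>j. j \<in> {..<N} - {i} \<Longrightarrow> norm (v j (t - \<tau>) - v i (t - \<sigma>)) \<le> M"
  shows "norm (F i t) \<le> M"
proof -
  have "norm (F i t) \<le> (\<Sum>j\<in>{..<N} - {i}. a i j t * M)"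
    using assms(3) a_pos by (intro order_trans[OF norm_F_le_sum] sum_mono mult_left_mono) (auto intro: less_imp_le)
  also have "\<dots> = M * (\<Sum>j\<in>{..<N} - {i}. a i j t)"
    by (simp add: sum_distrib_left mult.commute)
  also have "\<dots> \<le> M"
    using sum_a_le_1[OF assms(1)] assms(2) by (simp add: mult_left_le)
  finally show ?thesis .
qed

lemma norm_F_less:
  assumes "i < N" and less: "\<And>j. j \<in> {..<N} - {i} \<Longrightarrow> norm (v j (t - \<tau>) - v i (t - \<sigma>)) < M"
  shows "norm (F i t) < M"
proof -
  obtain j where "j \<in> {..<N} - {i}"
    using others_nonempty by blast
  then have "0 < M"
    using less by (meson le_less_trans norm_ge_zero)
  have "(\<Sum>j\<in>{..<N} - {i}. a i j t * norm (v j (t - \<tau>) - v i (t - \<sigma>))) < (\<Sum>j\<in>{..<N} - {i}. a i j t * M)"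
    using others_nonempty a_pos less by (intro sum_strict_mono) auto
  also have "\<dots> = M * (\<Sum>j\<in>{..<N} - {i}. a i j t)"
    by (simp add: sum_distrib_left mult.commute)
  also have "\<dots> \<le> M"
    using sum_a_le_1[OF assms(1)] \<open>0 < M\<close> by (simp add: mult_left_le)
  finally show ?thesis
    by (rule le_less_trans[OF norm_F_le_sum])
qed

lemma x_cont: "i < N \<Longrightarrow> continuous_on {-\<tau>..} (x i)"
  unfolding continuous_on_eq_continuous_within
  using has_vector_derivative_continuous[OF x_deriv] by simp

lemma x_has_derivative_at: "i < N \<Longrightarrow> t > -\<tau> \<Longrightarrow> (x i has_vector_derivative v i t) (at t)"
  using x_deriv[of i t] at_within_interior[of t "{-\<tau>..}"] by simp

lemma F_cont: "i < N \<Longrightarrow> continuous_on {0..} (F i)"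
proof -
  assume i: "i < N"
  have x_shift: "continuous_on {0..} (\<lambda>t. x j (t - c))" and v_shift: "continuous_on {0..} (\<lambda>t. v j (t - c))"
    if "j < N" "c \<le> \<tau>" for j c
    using continuous_on_shift[OF x_cont[OF that(1)] that(2)] continuous_on_shift[OF v_cont[OF that(1)] that(2)] .
  have "continuous_on {0..} (\<lambda>t. a i j t)" if "j < N" for j
  proof -
    have "continuous_on {0..} (\<lambda>t. \<psi> (norm (x i (t - \<sigma>) - x j (t - \<tau>))))"
      by (rule continuous_on_compose2[OF psi_cont])
         (use x_shift[OF i] x_shift[OF that] sig in \<open>auto intro!: continuous_intros\<close>)
    then show ?thesis
      unfolding a_def by (intro continuous_intros) (use N in auto)
  qed
  then show ?thesis
    unfolding F_def using i sig by (intro continuous_intros v_shift) auto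
qed

lemma initial_bounds:
  assumes "i < N" "j < N" "s \<in> {-\<tau>..0}" "t \<in> {-\<tau>..0}"
  shows "norm (x i s - x j t) \<le> Dx" and "norm (v i s - v j t) \<le> Dv"
proof -
  have "continuous_on {-\<tau>..0} (x i)" "continuous_on {-\<tau>..0} (v i)" if "i < N" for i
    using x_cont[OF that] v_cont[OF that] by (auto elim: continuous_on_subset)
  then show "norm (x i s - x j t) \<le> Dx" "norm (v i s - v j t) \<le> Dv"
    using assms by (auto intro: norm_le_Delta0)
qed

lemma Dx_nonneg: "0 \<le> Dx"
  using initial_bounds(1)[of 0 0 0 0] N tau_pos by simp

lemma Dv_nonneg: "0 \<le> Dv"
  using initial_bounds(2)[of 0 0 0 0] N tau_pos by simp

lemma norm_v_diff_le:
  assumes "j < N" "0 \<le> r" "r \<le> t"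
    and "\<And>s. r < s \<Longrightarrow> s < t \<Longrightarrow> norm (F j s) \<le> M"
  shows "norm (v j t - v j r) \<le> M * (t - r)"
proof (rule mvt_norm_le[where f' = "F j"])
  show "continuous_on {r..t} (v j)"
    by (rule continuous_on_subset[OF v_cont[OF assms(1)]]) (use assms tau_pos in auto)
qed (use assms v_has_derivative_F in auto)

definition F_sup where "F_sup = Sup (\<Union>i<N. (\<lambda>q. norm (F i q)) ` {0..\<tau>})"

lemma norm_F_le_F_sup:
  assumes "i < N" "q \<in> {0..\<tau>}"
  shows "norm (F i q) \<le> F_sup"
proof -
  have "bounded (\<Union>i<N. (\<lambda>q. norm (F i q)) ` {0..\<tau>})"
    using continuous_on_subset[OF F_cont]
    by (intro bounded_UN ballI compact_imp_bounded compact_continuous_image continuous_intros) auto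
  moreover have "norm (F i q) \<in> (\<Union>i<N. (\<lambda>q. norm (F i q)) ` {0..\<tau>})"
    using assms by blast
  ultimately show ?thesis
    unfolding F_sup_def by (intro cSup_upper bounded_imp_bdd_above)
qed

lemma F_sup_nonneg: "0 \<le> F_sup"
proof -
  have "norm (F 0 0) \<le> F_sup"
    using N tau_pos by (intro norm_F_le_F_sup) auto
  then show ?thesis
    by (rule order_trans[OF norm_ge_zero])
qed

text \<open>On \<open>[0, \<tau>]\<close> the delayed velocities are initial data except on a stretch
  \<open>[0, q - \<sigma>]\<close> of length at most \<open>\<tau> - \<sigma>\<close>.\<close>

lemma norm_F_initial_le:
  assumes i: "i < N" and q: "q \<in> {0..\<tau>}"
  shows "norm (F i q) \<le> Dv + (\<tau> - \<sigma>) * F_sup"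
proof (rule norm_F_le[OF i])
  show "0 \<le> Dv + (\<tau> - \<sigma>) * F_sup"
    using Dv_nonneg F_sup_nonneg sig by simp
  fix j assume j: "j \<in> {..<N} - {i}"
  show "norm (v j (q - \<tau>) - v i (q - \<sigma>)) \<le> Dv + (\<tau> - \<sigma>) * F_sup"
  proof (cases "q \<le> \<sigma>")
    case True
    then have "norm (v j (q - \<tau>) - v i (q - \<sigma>)) \<le> Dv"
      using initial_bounds(2) i j q sig by auto
    moreover have "0 \<le> (\<tau> - \<sigma>) * F_sup"
      using F_sup_nonneg sig by simp
    ultimately show ?thesis
      by linarith
  next
    case False
    have "norm (v j (q - \<tau>) - v i 0) \<le> Dv"
      using initial_bounds(2) i j q tau_pos by auto
    have "norm (v i 0 - v i (q - \<sigma>)) \<le> F_sup * (q - \<sigma> - 0)"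
      using False q sig i
      by (subst norm_minus_commute, intro norm_v_diff_le norm_F_le_F_sup) auto
    also have "\<dots> \<le> (\<tau> - \<sigma>) * F_sup"
      using F_sup_nonneg q by (simp add: mult.commute mult_right_mono)
    finally show ?thesis
      by (rule norm_diff_triangle_le[OF \<open>norm (v j (q - \<tau>) - v i 0) \<le> Dv\<close>])
  qed
qed

lemma F_sup_le:
  assumes "\<tau> - \<sigma> < 1"
  shows "F_sup \<le> Dv / (1 - (\<tau> - \<sigma>))"
proof -
  have "norm (F 0 0) \<in> (\<Union>i<N. (\<lambda>q. norm (F i q)) ` {0..\<tau>})"
    using N tau_pos by (intro UN_I[of 0]) auto
  then have "F_sup \<le> Dv + (\<tau> - \<sigma>) * F_sup"
    unfolding F_sup_def using norm_F_initial_le[unfolded F_sup_def] by (intro cSup_least) auto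
  then show ?thesis
    using assms by (simp add: pos_le_divide_eq algebra_simps)
qed

lemma v_gap_initial_le:
  assumes "\<tau> - \<sigma> < 1" "0 \<le> s" "s \<le> \<tau>" "i < N" "j < N"
  shows "norm (v i s - v j s) \<le> Dv * (1 + 2 * \<tau> / (1 - (\<tau> - \<sigma>)))"
proof -
  have drift: "norm (v l s - v l 0) \<le> Dv / (1 - (\<tau> - \<sigma>)) * \<tau>" if "l < N" for l
  proof -
    have "norm (v l s - v l 0) \<le> F_sup * (s - 0)"
      using assms that by (intro norm_v_diff_le norm_F_le_F_sup) auto
    also have "\<dots> \<le> Dv / (1 - (\<tau> - \<sigma>)) * \<tau>"
      using F_sup_le[OF assms(1)] F_sup_nonneg assms(2,3) by (intro mult_mono) auto
    finally show ?thesis .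
  qed
  have "norm (v i s - v j s) \<le> norm (v i 0 - v j 0) + norm (v i s - v i 0) + norm (v j s - v j 0)"
    using norm_triangle_ineq4[of "v i 0 - v j 0 + (v i s - v i 0)" "v j s - v j 0"]
      norm_triangle_ineq[of "v i 0 - v j 0" "v i s - v i 0"] by (simp add: algebra_simps)
  also have "\<dots> \<le> Dv + Dv / (1 - (\<tau> - \<sigma>)) * \<tau> + Dv / (1 - (\<tau> - \<sigma>)) * \<tau>"
  proof -
    have "norm (v i 0 - v j 0) \<le> Dv"
      using initial_bounds(2) assms(4,5) tau_pos by simp
    then show ?thesis
      using drift[OF assms(4)] drift[OF assms(5)] by linarith
  qed
  also have "\<dots> = Dv * (1 + 2 * \<tau> / (1 - (\<tau> - \<sigma>)))"
    by (simp add: algebra_simps)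
  finally show ?thesis .
qed

end

locale delayed_cucker_smale_barrier = delayed_cucker_smale +
  fixes C B P d G :: real
  assumes C_pos: "C > 0"
    and d_def: "d = \<tau> - \<sigma>"
    and G_def: "G = exp (C * \<tau>) / (1 - d * exp (C * \<tau>))"
    and delay_small: "d * exp (C * \<tau>) < 1"
    and initial_gap: "Delta0 N \<tau> v * (1 + 2 * \<tau> / (1 - d)) < B * exp (- C * \<tau>)"
    and position_budget: "Delta0 N \<tau> x + (1 + d * G) * exp (C * d) * B / C \<le> P"
    and rate_margin: "C + 2 * (\<tau> + \<sigma>) * G * exp (C * \<tau>) < \<psi> P"
begin

definition b where "b t = B * exp (- C * t)"

lemma d_nonneg: "0 \<le> d"
  using sig d_def by simp

lemma d_lt_1: "d < 1"
proof -
  have "d * 1 \<le> d * exp (C * \<tau>)"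
    using C_pos tau_pos d_nonneg by (intro mult_left_mono) auto
  then show ?thesis
    using delay_small by simp
qed

lemma G_pos: "G > 0"
  using delay_small G_def by simp

lemma G_eq: "1 + d * G = G * exp (- C * \<tau>)"
proof -
  have "exp (C * \<tau>) * exp (- C * \<tau>) = 1"
    by (simp flip: exp_add)
  then show ?thesis
    unfolding G_def using delay_small by (simp add: field_simps)
qed

lemma B_pos: "B > 0"
proof -
  have "0 \<le> Dv * (1 + 2 * \<tau> / (1 - d))"
    using Dv_nonneg d_lt_1 tau_pos by simp
  then have "0 < B * exp (- C * \<tau>)"
    using initial_gap by linarith
  then show ?thesis
    by (simp add: zero_less_mult_iff)
qed

lemma Dv_less_B: "Dv < B"
proof -
  have "Dv * 1 \<le> Dv * (1 + 2 * \<tau> / (1 - d))"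
    using Dv_nonneg d_lt_1 tau_pos by (intro mult_left_mono) auto
  also have "\<dots> < B * exp (- C * \<tau>)"
    by (rule initial_gap)
  also have "\<dots> \<le> B"
    using B_pos C_pos tau_pos by (intro mult_left_le) auto
  finally show ?thesis by simp
qed

lemma b_pos: "b t > 0"
  unfolding b_def using B_pos by simp

lemma b_antimono: "s \<le> t \<Longrightarrow> b t \<le> b s"
  unfolding b_def using B_pos C_pos by simp

lemma b_shift: "b (t - c) = exp (C * c) * b t"
  unfolding b_def by (simp add: algebra_simps flip: exp_add)

lemma B_le_G_b: "t \<le> \<tau> \<Longrightarrow> B \<le> G * b t"
proof -
  assume "t \<le> \<tau>"
  have "0 \<le> d * G"
    using d_nonneg G_pos by simp
  then have "B * 1 \<le> B * (G * exp (- C * \<tau>))"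
    using G_eq B_pos by (intro mult_left_mono) auto
  also have "\<dots> = G * b \<tau>"
    unfolding b_def by simp
  also have "\<dots> \<le> G * b t"
    using b_antimono[OF \<open>t \<le> \<tau>\<close>] G_pos by simp
  finally show ?thesis by simp
qed

text \<open>This identity is where \<open>G\<close> comes from: delaying by \<open>\<tau>\<close> costs the factor
  \<open>exp (C \<tau>)\<close>, and the drift over the gap \<open>d\<close> between the two delays costs \<open>d G\<close>.\<close>

lemma b_delay: "(1 + d * G) * b (t - \<tau>) = G * b t"
proof -
  have "exp (- C * \<tau>) * exp (C * \<tau>) = 1"
    by (simp flip: exp_add)
  then show ?thesis
    unfolding G_eq b_shift by (simp add: algebra_simps)
qed

definition under_barrier where
  "under_barrier t \<longleftrightarrow> (\<forall>s i j. 0 \<le> s \<longrightarrow> s < t \<longrightarrow> i < N \<longrightarrow> j < N \<longrightarrow>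
      norm (v i s - v j s) < b s \<and> norm (F i s) < G * b s)"

lemma v_drift_le:
  assumes "under_barrier t" "0 \<le> r" "r \<le> s" "s \<le> t" "j < N"
  shows "norm (v j s - v j r) \<le> G * b r * (s - r)"
proof (rule norm_v_diff_le[OF assms(5,2,3)])
  fix q assume q: "r < q" "q < s"
  have "norm (F j q) < G * b q"
    using assms q unfolding under_barrier_def by auto
  also have "\<dots> \<le> G * b r"
    using b_antimono[of r q] q G_pos by simp
  finally show "norm (F j q) \<le> G * b r" by simp
qed

lemma norm_F_less_G_b:
  assumes g: "under_barrier t" and t: "0 \<le> t" and i: "i < N"
  shows "norm (F i t) < G * b t"
proof (rule norm_F_less[OF i])
  fix j assume "j \<in> {..<N} - {i}"
  then have j: "j < N" by simp
  consider "t < \<sigma>" | "\<sigma> \<le> t" "t < \<tau>" | "\<tau> \<le> t"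
    by linarith
  then show "norm (v j (t - \<tau>) - v i (t - \<sigma>)) < G * b t"
  proof cases
    case 1
    then have "norm (v j (t - \<tau>) - v i (t - \<sigma>)) \<le> Dv"
      using initial_bounds(2) i j t sig by auto
    also have "\<dots> < B" by (rule Dv_less_B)
    also have "\<dots> \<le> G * b t"
      using B_le_G_b 1 sig by simp
    finally show ?thesis .
  next
    case 2
    have "norm (v j (t - \<tau>) - v i 0) \<le> Dv"
      using initial_bounds(2) i j t 2 by auto
    moreover have "norm (v i 0 - v i (t - \<sigma>)) \<le> G * b 0 * (t - \<sigma> - 0)"
      using v_drift_le[OF g _ _ _ i, of 0 "t - \<sigma>"] 2 sig by (simp add: norm_minus_commute)
    moreover have "G * b 0 * (t - \<sigma> - 0) \<le> G * B * d"
      using G_pos B_pos 2 d_def unfolding b_def by simp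
    ultimately have "norm (v j (t - \<tau>) - v i (t - \<sigma>)) < B + G * B * d"
      using norm_diff_triangle_le[of "v j (t - \<tau>)" "v i 0"] Dv_less_B by fastforce
    also have "\<dots> = (1 + d * G) * b 0"
      unfolding b_def by (simp add: algebra_simps)
    also have "\<dots> \<le> (1 + d * G) * b (t - \<tau>)"
      using b_antimono[of "t - \<tau>" 0] 2 d_nonneg G_pos by (simp add: mult_left_mono)
    finally show ?thesis
      unfolding b_delay .
  next
    case 3
    have "norm (v j (t - \<tau>) - v i (t - \<tau>)) < b (t - \<tau>)"
      using g i j 3 tau_pos unfolding under_barrier_def by auto
    moreover have "norm (v i (t - \<tau>) - v i (t - \<sigma>)) \<le> G * b (t - \<tau>) * d"
      using v_drift_le[OF g _ _ _ i, of "t - \<tau>" "t - \<sigma>"] 3 sig d_def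
      by (simp add: norm_minus_commute)
    ultimately have "norm (v j (t - \<tau>) - v i (t - \<sigma>)) < b (t - \<tau>) + G * b (t - \<tau>) * d"
      using norm_diff_triangle_le[of "v j (t - \<tau>)" "v i (t - \<tau>)"] by fastforce
    also have "\<dots> = G * b t"
      using b_delay by (simp add: algebra_simps)
    finally show ?thesis .
  qed
qed

lemma drift_factor_le:
  assumes "0 \<le> l" "l \<le> d"
  shows "1 + G * (l * exp (C * l)) \<le> (1 + d * G) * exp (C * d)"
proof -
  have "G * (l * exp (C * l)) \<le> G * (d * exp (C * d))"
    using assms C_pos G_pos by (intro mult_left_mono mult_mono) auto
  moreover have "1 \<le> exp (C * d)"
    using C_pos d_nonneg by simp
  moreover have "(1 + d * G) * exp (C * d) = exp (C * d) + G * (d * exp (C * d))"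
    by (simp add: algebra_simps)
  ultimately show ?thesis
    by linarith
qed

lemma relative_velocity_le:
  assumes g: "under_barrier t" and i: "i < N" and j: "j < N"
    and l: "0 \<le> l" "l \<le> d" and s: "0 < s" "s < t"
  shows "norm (v i s - v j (s - l)) \<le> (1 + d * G) * exp (C * d) * B * exp (- C * s)"
proof (cases "l \<le> s")
  case True
  have "norm (v i s - v j s) < b s"
    using g s i j unfolding under_barrier_def by auto
  moreover have "norm (v j s - v j (s - l)) \<le> G * b (s - l) * l"
    using v_drift_le[OF g _ _ _ j, of "s - l" s] True s l by simp
  ultimately have "norm (v i s - v j (s - l)) \<le> b s + G * (exp (C * l) * b s) * l"
    using norm_diff_triangle_le[of "v i s" "v j s"] b_shift[of s l] by fastforce
  also have "\<dots> = b s * (1 + G * (l * exp (C * l)))"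
    by (simp add: algebra_simps)
  also have "\<dots> \<le> b s * ((1 + d * G) * exp (C * d))"
    using drift_factor_le[OF l] b_pos[of s] by simp
  finally show ?thesis
    unfolding b_def by (simp add: algebra_simps)
next
  case False
  have "norm (v i s - v i 0) \<le> G * b 0 * (s - 0)"
    using v_drift_le[OF g _ _ _ i, of 0 s] s by simp
  moreover have "norm (v i 0 - v j (s - l)) \<le> Dv"
    using initial_bounds(2) i j False s l d_def sig by auto
  moreover have "G * b 0 * (s - 0) \<le> G * B * d"
    using G_pos B_pos False l unfolding b_def by simp
  ultimately have "norm (v i s - v j (s - l)) \<le> G * B * d + B"
    using norm_diff_triangle_le[of "v i s" "v i 0"] Dv_less_B by fastforce
  also have "\<dots> = (1 + d * G) * B"
    by (simp add: algebra_simps)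
  also have "\<dots> \<le> (1 + d * G) * B * exp (C * (d - s))"
  proof -
    have "1 \<le> exp (C * (d - s))" "0 \<le> (1 + d * G) * B"
      using C_pos False l d_nonneg G_pos B_pos by simp_all
    then show ?thesis
      using mult_left_mono[of 1 "exp (C * (d - s))" "(1 + d * G) * B"] by simp
  qed
  also have "\<dots> = (1 + d * G) * exp (C * d) * B * exp (- C * s)"
    by (simp add: algebra_simps right_diff_distrib flip: exp_add)
  finally show ?thesis .
qed

lemma position_gap_le:
  assumes g: "under_barrier t" and i: "i < N" and j: "j < N"
    and l: "0 \<le> l" "l \<le> d" and r: "-\<tau> + l \<le> r" "r \<le> t"
  shows "norm (x i r - x j (r - l)) \<le> P"
proof -
  define H where "H = (1 + d * G) * exp (C * d) * B"
  have "0 \<le> H"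
    unfolding H_def using d_nonneg G_pos B_pos by simp
  then have budget: "Dx + H / C \<le> P" and "0 \<le> H / C"
    using position_budget C_pos unfolding H_def by simp_all
  show ?thesis
  proof (cases "r \<le> 0")
    case True
    then have "norm (x i r - x j (r - l)) \<le> Dx"
      using initial_bounds(1) i j r l d_def sig by auto
    then show ?thesis
      using budget \<open>0 \<le> H / C\<close> by linarith
  next
    case False
    have "norm ((x i r - x j (r - l)) - (x i 0 - x j (0 - l))) \<le> H / C * exp (- C * 0)"
    proof (rule mvt_norm_le_exp[OF _ C_pos \<open>0 \<le> H\<close>, where f' = "\<lambda>s. v i s - v j (s - l)"])
      have "continuous_on {0..r} (x i)" "continuous_on {0..r} (\<lambda>s. x j (s - l))"
        using continuous_on_subset[OF x_cont[OF i]] continuous_on_shift[OF x_cont[OF j], of l]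
          tau_pos l d_def sig by (auto elim!: continuous_on_subset)
      then show "continuous_on {0..r} (\<lambda>s. x i s - x j (s - l))"
        by (intro continuous_intros)
      fix s assume s: "0 < s" "s < r"
      show "((\<lambda>s. x i s - x j (s - l)) has_vector_derivative v i s - v j (s - l)) (at s)"
        using s l d_def sig tau_pos
        by (intro has_vector_derivative_diff x_has_derivative_at[OF i]
            has_vector_derivative_at_shift x_has_derivative_at[OF j]) auto
      show "norm (v i s - v j (s - l)) \<le> H * exp (- C * s)"
        unfolding H_def using relative_velocity_le[OF g i j l] s r by simp
    qed (use False in simp)
    moreover have "norm (x i 0 - x j (0 - l)) \<le> Dx"
      using initial_bounds(1) i j l d_def sig tau_pos by auto
    ultimately have "norm (x i r - x j (r - l)) \<le> Dx + H / C"
      using norm_triangle_ineq2[of "x i r - x j (r - l)" "x i 0 - x j (0 - l)"] by simp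
    then show ?thesis
      using budget by linarith
  qed
qed

lemma position_budget_nonneg: "0 \<le> P"
proof -
  have "0 \<le> (1 + d * G) * exp (C * d) * B / C"
    using d_nonneg G_pos B_pos C_pos by simp
  then show ?thesis
    using position_budget Dx_nonneg by linarith
qed

lemma inner_F_le:
  assumes g: "under_barrier t" and t: "\<tau> < t" and i: "i < N"
    and behind: "\<And>j. j < N \<Longrightarrow> w \<bullet> (v j t - v i t) \<le> 0"
  shows "w \<bullet> F i t
    \<le> \<psi> P / real (N - 1) * (\<Sum>j<N. w \<bullet> (v j t - v i t)) + norm w * (G * b (t - \<tau>) * (\<tau> + \<sigma>))"
proof -
  have "\<psi> P / real (N - 1) \<le> a i j t" if "j < N" for j
  proof (rule a_ge)
    have "norm (x i (t - \<sigma>) - x j (t - \<sigma> - d)) \<le> P"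
      using t sig d_def by (intro position_gap_le[OF g i that]) auto
    then show "norm (x i (t - \<sigma>) - x j (t - \<tau>)) \<le> P"
      by (simp add: d_def)
  qed
  moreover have "norm (v j (t - \<tau>) - v j t) \<le> G * b (t - \<tau>) * \<tau>" if "j < N" for j
    using v_drift_le[OF g _ _ _ that, of "t - \<tau>" t] t tau_pos by (simp add: norm_minus_commute)
  moreover have "norm (v i t - v i (t - \<sigma>)) \<le> G * b (t - \<tau>) * \<sigma>"
  proof -
    have "norm (v i t - v i (t - \<sigma>)) \<le> G * b (t - \<sigma>) * \<sigma>"
      using v_drift_le[OF g _ _ _ i, of "t - \<sigma>" t] t sig by simp
    also have "\<dots> \<le> G * b (t - \<tau>) * \<sigma>"
      using b_antimono[of "t - \<tau>" "t - \<sigma>"] sig G_pos by (simp add: mult_right_mono)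
    finally show ?thesis .
  qed
  ultimately have "w \<bullet> F i t \<le> \<psi> P / real (N - 1) * (\<Sum>j\<in>{..<N} - {i}. w \<bullet> (v j t - v i t))
      + norm w * (G * b (t - \<tau>) * \<tau> + G * b (t - \<tau>) * \<sigma>)"
    unfolding F_def
    using psi_pos[OF position_budget_nonneg] N_minus_1_pos G_pos b_pos[of "t - \<tau>"] tau_pos
      sum_a_le_1[OF i] behind
    by (intro inner_delayed_alignment_le) auto
  moreover have "(\<Sum>j\<in>{..<N} - {i}. w \<bullet> (v j t - v i t)) = (\<Sum>j<N. w \<bullet> (v j t - v i t))"
    using i by (simp add: sum_diff1)
  ultimately show ?thesis
    by (simp add: algebra_simps)
qed

text \<open>At a time where the pair \<open>(i, k)\<close> realises the velocity diameter \<open>b t\<close>, all velocities lie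
  behind \<open>v i t\<close> in direction \<open>w = v i t - v k t\<close> and behind \<open>v k t\<close> in direction \<open>-w\<close>, so both
  alignment terms contract the gap at rate at least \<open>\<psi> P\<close>.\<close>

lemma inner_F_gap_le:
  assumes g: "under_barrier t" and t: "\<tau> < t" and i: "i < N" and k: "k < N"
    and diam: "\<And>i j. i < N \<Longrightarrow> j < N \<Longrightarrow> norm (v i t - v j t) \<le> b t"
    and touch: "norm (v i t - v k t) = b t"
  shows "(v i t - v k t) \<bullet> (F i t - F k t) \<le> (2 * (\<tau> + \<sigma>) * G * exp (C * \<tau>) - \<psi> P) * (b t)\<^sup>2"
proof -
  define w where "w = v i t - v k t"
  define a_min where "a_min = \<psi> P / real (N - 1)"
  have ww: "w \<bullet> w = (b t)\<^sup>2"
    using touch by (simp add: w_def flip: power2_norm_eq_inner)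
  have "w \<bullet> (v j t - v i t) \<le> 0" "(v k t - v i t) \<bullet> (v j t - v k t) \<le> 0" if "j < N" for j
    using diam touch that i k
    by (auto simp: w_def norm_minus_commute intro!: inner_diameter_le_0[where A = "{..<N}"])
  then have behind: "w \<bullet> (v j t - v i t) \<le> 0" "(- w) \<bullet> (v j t - v k t) \<le> 0" if "j < N" for j
    using that by (simp_all add: w_def)
  define R where "R = G * b (t - \<tau>) * (\<tau> + \<sigma>)"
  have "w \<bullet> F i t \<le> a_min * (\<Sum>j<N. w \<bullet> (v j t - v i t)) + norm w * R"
    unfolding a_min_def R_def using behind(1) by (rule inner_F_le[OF g t i])
  moreover have "(- w) \<bullet> F k t \<le> a_min * (\<Sum>j<N. (- w) \<bullet> (v j t - v k t)) + norm (- w) * R"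
    unfolding a_min_def R_def using behind(2) by (rule inner_F_le[OF g t k])
  ultimately have "w \<bullet> (F i t - F k t)
      \<le> a_min * ((\<Sum>j<N. w \<bullet> (v j t - v i t)) + (\<Sum>j<N. (- w) \<bullet> (v j t - v k t))) + 2 * (norm w * R)"
    by (simp add: inner_diff_right distrib_left)
  also have "(\<Sum>j<N. w \<bullet> (v j t - v i t)) + (\<Sum>j<N. (- w) \<bullet> (v j t - v k t)) = - (real N * (w \<bullet> w))"
    by (simp add: w_def inner_diff_right algebra_simps flip: sum.distrib)
  also have "2 * (norm w * R) = 2 * (\<tau> + \<sigma>) * G * exp (C * \<tau>) * (w \<bullet> w)"
    using touch ww by (simp add: R_def w_def b_shift power2_eq_square algebra_simps)
  also have "\<psi> P * (w \<bullet> w) \<le> a_min * (real N * (w \<bullet> w))"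
  proof -
    have "\<psi> P * 1 * (w \<bullet> w) \<le> \<psi> P * (real N / real (N - 1)) * (w \<bullet> w)"
      using psi_pos[OF position_budget_nonneg] N_minus_1_pos ww
      by (intro mult_right_mono mult_left_mono) auto
    then show ?thesis
      unfolding a_min_def using N_minus_1_pos by (simp add: field_simps)
  qed
  then have "a_min * - (real N * (w \<bullet> w)) + 2 * (\<tau> + \<sigma>) * G * exp (C * \<tau>) * (w \<bullet> w)
      \<le> (2 * (\<tau> + \<sigma>) * G * exp (C * \<tau>) - \<psi> P) * (b t)\<^sup>2"
    unfolding ww by (simp add: algebra_simps)
  finally show ?thesis
    unfolding w_def .
qed

lemma has_real_derivative_gap_energy:
  assumes t: "0 < t" and i: "i < N" and k: "k < N"
  shows "((\<lambda>s. (v i s - v k s) \<bullet> (v i s - v k s) - (b s)\<^sup>2) has_real_derivative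
      2 * ((v i t - v k t) \<bullet> (F i t - F k t)) - - 2 * C * (b t)\<^sup>2) (at t)"
proof -
  have gap: "((\<lambda>s. v i s - v k s) has_derivative (\<lambda>h. h *\<^sub>R (F i t - F k t))) (at t)"
    using has_vector_derivative_diff[OF v_has_derivative_F[OF i t] v_has_derivative_F[OF k t]]
    unfolding has_vector_derivative_def .
  have "((\<lambda>s. (v i s - v k s) \<bullet> (v i s - v k s)) has_real_derivative 2 * ((v i t - v k t) \<bullet> (F i t - F k t))) (at t)"
    unfolding has_field_derivative_def
    by (rule has_derivative_eq_rhs[OF has_derivative_inner[OF gap gap]])
       (auto simp: fun_eq_iff inner_commute algebra_simps)
  moreover have "((\<lambda>s. (b s)\<^sup>2) has_real_derivative - 2 * C * (b t)\<^sup>2) (at t)"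
    unfolding b_def by (auto intro!: derivative_eq_intros simp: power2_eq_square algebra_simps)
  ultimately show ?thesis
    by (rule DERIV_diff)
qed

lemma v_gap_less:
  assumes g: "under_barrier t" and t: "\<tau> < t"
    and diam: "\<And>i j. i < N \<Longrightarrow> j < N \<Longrightarrow> norm (v i t - v j t) \<le> b t"
    and i: "i < N" and k: "k < N"
  shows "norm (v i t - v k t) < b t"
proof (rule ccontr)
  assume "\<not> ?thesis"
  then have touch: "norm (v i t - v k t) = b t"
    using diam[OF i k] by simp
  have t0: "0 < t"
    using t tau_pos by simp
  define \<phi> where "\<phi> s = (v i s - v k s) \<bullet> (v i s - v k s) - (b s)\<^sup>2" for s
  have "(\<phi> has_real_derivative 2 * ((v i t - v k t) \<bullet> (F i t - F k t)) - - 2 * C * (b t)\<^sup>2) (at t)"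
    unfolding \<phi>_def by (rule has_real_derivative_gap_energy[OF t0 i k])
  moreover have "2 * ((v i t - v k t) \<bullet> (F i t - F k t)) - - 2 * C * (b t)\<^sup>2 < 0"
  proof -
    have "(2 * (\<tau> + \<sigma>) * G * exp (C * \<tau>) - \<psi> P + C) * (b t)\<^sup>2 < 0"
      using rate_margin b_pos[of t] by (intro mult_neg_pos) auto
    then show ?thesis
      using inner_F_gap_le[OF g t i k diam touch] by (simp add: algebra_simps)
  qed
  ultimately obtain \<delta> where "\<delta> > 0" and dec: "\<And>h. 0 < h \<Longrightarrow> h < \<delta> \<Longrightarrow> \<phi> t < \<phi> (t - h)"
    by (metis DERIV_neg_dec_left)
  define h where "h = min \<delta> t / 2"
  have h: "0 < h" "h < \<delta>" "h \<le> t"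
    using \<open>\<delta> > 0\<close> t0 unfolding h_def by auto
  have "norm (v i (t - h) - v k (t - h)) < b (t - h)"
    using g h i k unfolding under_barrier_def by auto
  then have "\<phi> (t - h) < 0"
    unfolding \<phi>_def using norm_ge_zero
    by (simp add: power2_norm_eq_inner[symmetric] power_strict_mono)
  moreover have "\<phi> t = 0"
    unfolding \<phi>_def using touch by (simp flip: power2_norm_eq_inner)
  ultimately show False
    using dec[OF h(1,2)] by simp
qed

lemma v_gap_less_b_initial:
  assumes "0 \<le> t" "t \<le> \<tau>" "i < N" "j < N"
  shows "norm (v i t - v j t) < b t"
proof -
  have "norm (v i t - v j t) \<le> Dv * (1 + 2 * \<tau> / (1 - d))"
    using v_gap_initial_le d_lt_1 assms d_def by simp
  also have "\<dots> < b \<tau>"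
    using initial_gap unfolding b_def .
  also have "\<dots> \<le> b t"
    by (rule b_antimono[OF assms(2)])
  finally show ?thesis .
qed

lemma under_barrier_everywhere: "under_barrier t"
proof -
  define f where "f = (\<lambda>(i, j) t. max (norm (v i t - v j t) - b t) (norm (F i t) - G * b t))"
  have neg: "f ij t < 0" if "0 \<le> t" "ij \<in> {..<N} \<times> {..<N}" for ij t
  proof (rule continuous_induction_negative[OF _ _ _ that])
    show "continuous_on {0..} (f p)" if p: "p \<in> {..<N} \<times> {..<N}" for p
    proof -
      obtain i j where ij: "p = (i, j)" "i < N" "j < N"
        using p by auto
      have "continuous_on {0..} (v i)" "continuous_on {0..} (v j)"
        using ij continuous_on_subset[OF v_cont] tau_pos by (auto simp: subset_eq)
      then show ?thesis
        unfolding f_def ij(1) b_def case_prod_conv by (intro continuous_intros F_cont ij)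
    qed
    fix t :: real assume t: "0 \<le> t"
      and before: "\<And>s ij. 0 \<le> s \<Longrightarrow> s < t \<Longrightarrow> ij \<in> {..<N} \<times> {..<N} \<Longrightarrow> f ij s < 0"
      and at: "\<And>ij. 0 < t \<Longrightarrow> ij \<in> {..<N} \<times> {..<N} \<Longrightarrow> f ij t \<le> 0"
    have g: "under_barrier t"
      unfolding under_barrier_def using before by (fastforce simp: f_def)
    show "\<forall>ij\<in>{..<N} \<times> {..<N}. f ij t < 0"
    proof (clarsimp simp: f_def)
      fix i j assume ij: "i < N" "j < N"
      have "norm (v i t - v j t) < b t"
      proof (cases "t \<le> \<tau>")
        case False
        then show ?thesis
          using at tau_pos by (intro v_gap_less[OF g _ _ ij]) (force simp: f_def)+
      qed (use v_gap_less_b_initial t ij in simp)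
      then show "norm (v i t - v j t) < b t \<and> norm (F i t) < G * b t"
        using norm_F_less_G_b[OF g t ij(1)] by simp
    qed
  qed simp
  then show ?thesis
    unfolding under_barrier_def f_def by fastforce
qed

lemma velocity_gap_decay: "0 \<le> t \<Longrightarrow> i < N \<Longrightarrow> j < N \<Longrightarrow> norm (v i t - v j t) < B * exp (- C * t)"
  using under_barrier_everywhere[of "t + 1"] unfolding under_barrier_def b_def by auto

lemma position_gap_bounded: "0 \<le> t \<Longrightarrow> i < N \<Longrightarrow> j < N \<Longrightarrow> norm (x i t - x j t) \<le> P"
  using position_gap_le[OF under_barrier_everywhere, of i j 0 t t] tau_pos d_nonneg by simp

lemma flocking:
  "bdd_above (dX N x ` {0..}) \<and> (dX N v \<longlongrightarrow> 0) at_top \<and> (\<exists>A>0. \<forall>t\<ge>0. dX N v t \<le> A * exp (- C * t))"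
proof (intro conjI)
  have N0: "0 < N"
    using N by simp
  have dv_le: "dX N v t \<le> B * exp (- C * t)" if "0 \<le> t" for t
    using velocity_gap_decay[OF that] by (intro dX_le[OF N0] less_imp_le)
  show "bdd_above (dX N x ` {0..})"
    using position_gap_bounded by (intro bdd_aboveI2[where M = P] dX_le[OF N0]) auto
  show "\<exists>A>0. \<forall>t\<ge>0. dX N v t \<le> A * exp (- C * t)"
    using B_pos dv_le by blast
  have "filterlim (\<lambda>t. - C * t) at_bot at_top"
    using C_pos by (intro filterlim_tendsto_neg_mult_at_bot[OF tendsto_const] filterlim_ident) auto
  then have lim: "((\<lambda>t. B * exp (- C * t)) \<longlongrightarrow> 0) at_top"
    by (intro tendsto_mult_right_zero filterlim_compose[OF exp_at_bot])
  show "(dX N v \<longlongrightarrow> 0) at_top"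
  proof (rule tendsto_sandwich[OF _ _ tendsto_const lim])
    show "eventually (\<lambda>t. 0 \<le> dX N v t) at_top"
      using dX_nonneg[OF N0] by (intro always_eventually allI)
    show "eventually (\<lambda>t. dX N v t \<le> B * exp (- C * t)) at_top"
      using dv_le by (auto simp: eventually_at_top_linorder)
  qed
qed

end

lemma exp_le_4_3:
  fixes x :: real
  assumes "0 \<le> x" "x \<le> 1/4"
  shows "exp x \<le> 4/3"
proof -
  have "exp x \<le> 1 + x + x\<^sup>2"
    using assms by (intro exp_bound) auto
  moreover have "x\<^sup>2 \<le> (1/4)\<^sup>2"
    using assms by (intro power_mono) auto
  ultimately show ?thesis
    using assms by (simp add: power2_eq_square)
qed

lemma continuous_on_exists_gt_right:
  fixes f :: "real \<Rightarrow> real"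
  assumes "continuous_on {a..} f" "a \<le> p" "c < f p"
  obtains q where "p < q" "c < f q"
proof -
  have "(f \<longlongrightarrow> f p) (at_right p)"
    using assms(1,2) by (auto simp: continuous_on_def intro: tendsto_within_subset)
  then have "eventually (\<lambda>q. c < f q) (at_right p)"
    using assms(3) by (rule order_tendstoD(1))
  then obtain r where "p < r" "\<And>q. p < q \<Longrightarrow> q < r \<Longrightarrow> c < f q"
    by (auto simp: eventually_at_right_field)
  then show ?thesis
    using that[of "(p + r) / 2"] by simp
qed

text \<open>Since \<open>\<psi> \<le> 1\<close>, the hypothesis of the theorem can only hold for short delays and slow
  rates.\<close>

lemma flocking_condition_small:
  fixes \<tau> \<beta> C :: real
  assumes "0 < \<tau>" "0 < \<beta>" "0 < C"
    and cond: "exp (C * \<tau>) * (4 * \<tau> * exp (C * \<tau>) + \<beta> * (1 - exp (- 2 * \<tau>))) + C \<le> 1"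
  shows "\<tau> < 1/4" and "exp (C * \<tau>) \<le> 4/3" and "exp (2 * \<tau>) - 1 < exp (2 * \<tau>) / \<beta>"
proof -
  define e where "e = exp (C * \<tau>)"
  define \<gamma> where "\<gamma> = \<beta> * (1 - exp (- 2 * \<tau>))"
  have "1 \<le> e"
    using assms by (simp add: e_def)
  have "0 < \<gamma>"
    using assms by (simp add: \<gamma>_def)
  have "1 * 1 \<le> e * e"
    using \<open>1 \<le> e\<close> by (intro mult_mono) auto
  then have "4 * \<tau> * 1 \<le> 4 * \<tau> * (e * e)"
    using assms(1) by (intro mult_left_mono) auto
  moreover have "\<gamma> * 1 \<le> \<gamma> * e"
    using \<open>1 \<le> e\<close> \<open>0 < \<gamma>\<close> by (intro mult_left_mono) auto
  moreover have "e * (4 * \<tau> * e + \<gamma>) = 4 * \<tau> * (e * e) + \<gamma> * e"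
    by (simp add: algebra_simps)
  ultimately have small: "C + 4 * \<tau> + \<gamma> \<le> 1"
    using cond unfolding e_def[symmetric] \<gamma>_def[symmetric] by linarith
  then show "\<tau> < 1/4"
    using \<open>0 < \<gamma>\<close> assms(3) by linarith
  have "C * \<tau> \<le> 1 * \<tau>"
    using small \<open>0 < \<gamma>\<close> assms by (intro mult_right_mono) auto
  then have "C * \<tau> \<le> 1/4"
    using \<open>\<tau> < 1/4\<close> by linarith
  then show "exp (C * \<tau>) \<le> 4/3"
    using assms by (intro exp_le_4_3) auto
  have "\<beta> * (exp (2 * \<tau>) - 1) = exp (2 * \<tau>) * \<gamma>"
    unfolding \<gamma>_def by (simp add: algebra_simps flip: exp_add)
  also have "\<dots> < exp (2 * \<tau>)"
    using small assms by simp
  finally show "exp (2 * \<tau>) - 1 < exp (2 * \<tau>) / \<beta>"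
    using assms(2) by (simp add: field_simps)
qed

lemma delay_coefficients_le:
  fixes \<sigma> \<tau> C :: real
  assumes "0 < \<sigma>" "\<sigma> \<le> \<tau>" "\<tau> < 1/4" "0 < C" "exp (C * \<tau>) \<le> 4/3"
  defines "d \<equiv> \<tau> - \<sigma>" and "G \<equiv> exp (C * \<tau>) / (1 - (\<tau> - \<sigma>) * exp (C * \<tau>))"
  shows "d * exp (C * \<tau>) \<le> 1/3"
    and "2 * (\<tau> + \<sigma>) * G * exp (C * \<tau>) \<le> 4 * \<tau> * (exp (C * \<tau>))\<^sup>2"
proof -
  define e where "e = exp (C * \<tau>)"
  have e: "1 \<le> e" "e \<le> 4/3"
    using assms by (simp_all add: e_def)
  have d: "0 \<le> d" "d < 1/4"
    using assms by (simp_all add: d_def)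
  show de: "d * exp (C * \<tau>) \<le> 1/3"
    using mult_mono[of d "1/4" e "4/3"] d e unfolding e_def by simp
  then have "2 * \<tau> * e \<le> 1"
    using mult_mono[of \<tau> "1/4" e "4/3"] assms(3) e d by (simp add: d_def)
  then have "d * (2 * \<tau> * e) \<le> d"
    using d mult_left_mono[of _ 1 d] by fastforce
  then have "2 * (\<tau> + \<sigma>) \<le> 4 * \<tau> * (1 - d * e)"
    by (simp add: d_def algebra_simps)
  then have "2 * (\<tau> + \<sigma>) / (1 - d * e) * (e * e) \<le> 4 * \<tau> * (e * e)"
    using de e unfolding e_def[symmetric] by (intro mult_right_mono) (simp_all add: pos_divide_le_eq)
  then show "2 * (\<tau> + \<sigma>) * G * exp (C * \<tau>) \<le> 4 * \<tau> * (exp (C * \<tau>))\<^sup>2"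
    by (simp add: G_def d_def[symmetric] e_def[symmetric] power2_eq_square)
qed

lemma delay_drift_coefficient_le:
  fixes \<sigma> \<tau> C :: real
  assumes "0 < \<sigma>" "\<sigma> \<le> \<tau>" "\<tau> < 1/4" "0 < C" "exp (C * \<tau>) \<le> 4/3"
  defines "d \<equiv> \<tau> - \<sigma>" and "G \<equiv> exp (C * \<tau>) / (1 - (\<tau> - \<sigma>) * exp (C * \<tau>))"
  shows "(1 + d * G) * exp (C * d) * (1 + 2 * \<tau> / (1 - d)) \<le> 3 * (1 + 2 * \<tau>)"
proof -
  define e where "e = exp (C * \<tau>)"
  have d: "0 \<le> d" "d < 1/4"
    using assms by (simp_all add: d_def)
  have de: "d * e \<le> 1/3"
    using delay_coefficients_le(1)[OF assms(1-5)] by (simp add: d_def e_def)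
  have "d * G = (d * e) / (1 - d * e)"
    by (simp add: G_def d_def e_def)
  also have "\<dots> \<le> 1/2"
    using de by (simp add: divide_le_eq)
  moreover have "exp (C * d) \<le> e"
    using assms d by (simp add: e_def d_def)
  then have "exp (C * d) \<le> 4/3"
    using assms(5) unfolding e_def by linarith
  ultimately have factor1: "(1 + d * G) * exp (C * d) \<le> 3/2 * (4/3)"
    by (intro mult_mono) auto
  have "2 * \<tau> / (1 - d) \<le> 2 * \<tau> / (3/4)"
    using d assms by (intro divide_left_mono) auto
  then have factor2: "1 + 2 * \<tau> / (1 - d) \<le> 4/3 * (1 + 2 * \<tau>)"
    by simp
  have "0 \<le> 1 + 2 * \<tau> / (1 - d)"
    using d assms by simp
  then have "(1 + d * G) * exp (C * d) * (1 + 2 * \<tau> / (1 - d)) \<le> 3/2 * (4/3) * (4/3 * (1 + 2 * \<tau>))"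
    by (intro mult_mono[OF factor1 factor2]) auto
  then show ?thesis
    by (rule order_trans) (use assms(1,2) in simp)
qed

lemma barrier_parameters:
  fixes \<sigma> \<tau> C Dx Dv P0 :: real and \<psi> :: "real \<Rightarrow> real"
  assumes "0 < \<sigma>" "\<sigma> \<le> \<tau>" "\<tau> < 1/4" "0 < C" "exp (C * \<tau>) \<le> 4/3" "0 \<le> Dv" "0 \<le> P0"
    and psi_cont: "continuous_on {0..} \<psi>"
    and rate: "C + 4 * \<tau> * (exp (C * \<tau>))\<^sup>2 < \<psi> P0"
    and budget: "Dx + 3 * (1 + 2 * \<tau>) * exp (C * \<tau>) * Dv / C \<le> P0"
  defines "d \<equiv> \<tau> - \<sigma>" and "G \<equiv> exp (C * \<tau>) / (1 - (\<tau> - \<sigma>) * exp (C * \<tau>))"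
  obtains B P where "d * exp (C * \<tau>) < 1"
    and "Dv * (1 + 2 * \<tau> / (1 - d)) < B * exp (- C * \<tau>)"
    and "Dx + (1 + d * G) * exp (C * d) * B / C \<le> P"
    and "C + 2 * (\<tau> + \<sigma>) * G * exp (C * \<tau>) < \<psi> P"
proof -
  define e where "e = exp (C * \<tau>)"
  define cT where "cT = 1 + 2 * \<tau> / (1 - d)"
  define Hc where "Hc = (1 + d * G) * exp (C * d)"
  note coeff = delay_coefficients_le[OF assms(1-5), folded d_def G_def]
    delay_drift_coefficient_le[OF assms(1-5), folded d_def G_def]
  have "0 \<le> d" "1 \<le> e"
    using assms by (simp_all add: d_def e_def)
  have "0 < G"
    using coeff(1) by (simp add: G_def d_def[symmetric])
  then have "0 < Hc"
    unfolding Hc_def using \<open>0 \<le> d\<close> by (simp add: add_pos_nonneg)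
  have "C + 2 * (\<tau> + \<sigma>) * G * exp (C * \<tau>) < \<psi> P0"
    using rate coeff(2) by linarith
  then obtain P where "P0 < P" and rate_P: "C + 2 * (\<tau> + \<sigma>) * G * exp (C * \<tau>) < \<psi> P"
    by (rule continuous_on_exists_gt_right[OF psi_cont \<open>0 \<le> P0\<close>])
  define \<eta> where "\<eta> = (P - P0) * C / Hc"
  have "0 < \<eta>"
    unfolding \<eta>_def using \<open>P0 < P\<close> \<open>0 < C\<close> \<open>0 < Hc\<close> by simp
  show ?thesis
  proof (rule that[of "e * cT * Dv + \<eta>" P])
    show "d * exp (C * \<tau>) < 1"
      using coeff(1) by simp
    have "e * exp (- C * \<tau>) = 1"
      by (simp add: e_def flip: exp_add)
    then have "(e * cT * Dv + \<eta>) * exp (- C * \<tau>) = cT * Dv + \<eta> * exp (- C * \<tau>)"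
      by (simp add: algebra_simps)
    then show "Dv * (1 + 2 * \<tau> / (1 - d)) < (e * cT * Dv + \<eta>) * exp (- C * \<tau>)"
      using \<open>0 < \<eta>\<close> by (simp add: cT_def mult.commute)
    have "Hc * e * cT * Dv / C \<le> 3 * (1 + 2 * \<tau>) * e * Dv / C"
      using coeff(3) \<open>1 \<le> e\<close> assms(4,6)
      by (intro divide_right_mono mult_right_mono) (auto simp: Hc_def cT_def)
    moreover have "Hc * \<eta> / C = P - P0"
      unfolding \<eta>_def using \<open>0 < Hc\<close> assms(4) by simp
    then have "(1 + d * G) * exp (C * d) * (e * cT * Dv + \<eta>) / C = Hc * e * cT * Dv / C + (P - P0)"
      unfolding Hc_def[symmetric] by (simp add: distrib_left add_divide_distrib mult.assoc)
    ultimately show "Dx + (1 + d * G) * exp (C * d) * (e * cT * Dv + \<eta>) / C \<le> P"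
      using budget unfolding e_def by linarith
  qed (fact rate_P)
qed

lemma flocking_condition_bounds:
  fixes \<sigma> \<tau> \<beta> C Dx Dv W Z1 Z0 :: real and \<psi> :: "real \<Rightarrow> real"
  assumes "0 < \<sigma>" "\<sigma> \<le> \<tau>" "0 < \<beta>" "0 < C" "0 \<le> Dx" "0 \<le> Dv" "0 \<le> W" "3 \<le> Z1" "0 \<le> Z0"
    and psi_le1: "\<And>s. 0 \<le> s \<Longrightarrow> \<psi> s \<le> 1"
  defines "P0 \<equiv> Dx + W * Dv
    + exp (C * \<tau>) / C * (1 + exp (2 * \<tau> + C * \<sigma>) / \<beta> + exp (C * \<tau>) * (\<tau> - \<sigma>))
      * (Z1 + Z0 * \<beta> * (1 - (1 + 2 * \<tau>) * exp (-2 * \<tau>))) * Dv"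
  assumes cond: "exp (C * \<tau>) * (4 * \<tau> * exp (C * \<tau>) + \<beta> * (1 - exp (-2 * \<tau>))) + C \<le> \<psi> P0"
  shows "\<tau> < 1/4" and "exp (C * \<tau>) \<le> 4/3" and "0 \<le> P0"
    and "C + 4 * \<tau> * (exp (C * \<tau>))\<^sup>2 < \<psi> P0"
    and "Dx + 3 * (1 + 2 * \<tau>) * exp (C * \<tau>) * Dv / C \<le> P0"
proof -
  define e where "e = exp (C * \<tau>)"
  define Q where "Q = 1 + exp (2 * \<tau> + C * \<sigma>) / \<beta> + e * (\<tau> - \<sigma>)"
  define Z where "Z = Z1 + Z0 * \<beta> * (1 - (1 + 2 * \<tau>) * exp (-2 * \<tau>))"
  have "0 < \<tau>" "1 \<le> e"
    using assms by (simp_all add: e_def)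
  have "(1 + 2 * \<tau>) * exp (-2 * \<tau>) \<le> exp (2 * \<tau>) * exp (-2 * \<tau>)"
    using exp_ge_add_one_self[of "2 * \<tau>"] by (intro mult_right_mono) auto
  then have "0 \<le> Z0 * \<beta> * (1 - (1 + 2 * \<tau>) * exp (-2 * \<tau>))"
    using assms(3,9) by (simp flip: exp_add)
  then have "3 \<le> Z"
    unfolding Z_def using assms(8) by linarith
  have "1 \<le> Q"
    unfolding Q_def using assms(1-3) \<open>1 \<le> e\<close> by simp
  have P0_eq: "P0 = Dx + W * Dv + e / C * Q * Z * Dv"
    by (simp add: P0_def e_def Q_def Z_def)
  show "0 \<le> P0"
    unfolding P0_eq using assms(4-7) \<open>1 \<le> e\<close> \<open>1 \<le> Q\<close> \<open>3 \<le> Z\<close> by simp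
  then have "\<psi> P0 \<le> 1"
    by (rule psi_le1)
  note small = flocking_condition_small[OF \<open>0 < \<tau>\<close> assms(3,4) order_trans[OF cond this]]
  show "\<tau> < 1/4" "exp (C * \<tau>) \<le> 4/3"
    using small(1,2) .
  have "0 < e * (\<beta> * (1 - exp (-2 * \<tau>)))"
    using \<open>0 < \<tau>\<close> assms(3) \<open>1 \<le> e\<close> by simp
  then show "C + 4 * \<tau> * (exp (C * \<tau>))\<^sup>2 < \<psi> P0"
    using cond unfolding e_def[symmetric] by (simp add: algebra_simps power2_eq_square)
  have "exp (2 * \<tau>) / \<beta> \<le> exp (2 * \<tau> + C * \<sigma>) / \<beta>"
    using assms by (simp add: divide_right_mono)
  moreover have "0 \<le> e * (\<tau> - \<sigma>)"
    using assms(2) \<open>1 \<le> e\<close> by simp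
  ultimately have "1 + 2 * \<tau> \<le> Q"
    unfolding Q_def using small(3) exp_ge_add_one_self[of "2 * \<tau>"] by linarith
  then have "3 * (1 + 2 * \<tau>) \<le> Z * Q"
    using \<open>3 \<le> Z\<close> \<open>0 < \<tau>\<close> by (intro mult_mono) auto
  then have "3 * (1 + 2 * \<tau>) * (e * Dv / C) \<le> Z * Q * (e * Dv / C)"
    using \<open>1 \<le> e\<close> assms(4,6) by (intro mult_right_mono) auto
  then have "3 * (1 + 2 * \<tau>) * e * Dv / C \<le> e / C * Q * Z * Dv"
    by (simp add: mult_ac)
  then show "Dx + 3 * (1 + 2 * \<tau>) * exp (C * \<tau>) * Dv / C \<le> P0"
    unfolding P0_eq e_def[symmetric] using mult_nonneg_nonneg[OF assms(7,6)] by linarith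
qed

theorem theorem1p2:
  fixes N K :: nat and \<sigma> \<tau> \<beta> C :: real and \<psi> :: "real \<Rightarrow> real"
    and x0 v0 x v :: "nat \<Rightarrow> real \<Rightarrow> real ^ 'd"
  assumes N: "N \<ge> 2"
    and sig: "0 < \<sigma>" "\<sigma> \<le> \<tau>"
    and psi_cont: "continuous_on {0..} \<psi>"
    and psi_mono: "\<And>s t. 0 \<le> s \<Longrightarrow> s \<le> t \<Longrightarrow> \<psi> t \<le> \<psi> s"
    and psi_pos: "\<And>s. 0 \<le> s \<Longrightarrow> \<psi> s > 0"
    and psi_le1: "\<And>s. 0 \<le> s \<Longrightarrow> \<psi> s \<le> 1"
    and x0_deriv: "\<And>i t. i < N \<Longrightarrow> t \<in> {-\<tau>..0} \<Longrightarrow>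
                     (x0 i has_vector_derivative v0 i t) (at t within {-\<tau>..0})"
    and v0_cont: "\<And>i. i < N \<Longrightarrow> continuous_on {-\<tau>..0} (v0 i)"
    and init_x: "\<And>i t. i < N \<Longrightarrow> t \<in> {-\<tau>..0} \<Longrightarrow> x i t = x0 i t"
    and init_v: "\<And>i t. i < N \<Longrightarrow> t \<in> {-\<tau>..0} \<Longrightarrow> v i t = v0 i t"
    and x_deriv: "\<And>i t. i < N \<Longrightarrow> t \<ge> -\<tau> \<Longrightarrow>
                     (x i has_vector_derivative v i t) (at t within {-\<tau>..})"
    and v_cont: "\<And>i. i < N \<Longrightarrow> continuous_on {-\<tau>..} (v i)"
    and v_deriv: "\<And>i t. i < N \<Longrightarrow> t > 0 \<Longrightarrow>
                     (v i has_vector_derivative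
                        (\<Sum>j\<in>{..<N} - {i}.
                           (\<psi> (norm (x i (t - \<sigma>) - x j (t - \<tau>))) / real (N - 1))
                             *\<^sub>R (v j (t - \<tau>) - v i (t - \<sigma>)))) (at t)"
    and K_def: "K = (LEAST k::nat. real k * \<sigma> \<ge> 2 * \<tau>)"
    and beta: "\<beta> > 0" "4 * \<tau> \<le> \<beta> * (2 * exp (-2 * \<tau>) - 1)"
    and Cpos: "C > 0"
    and Ccond: "exp (C * \<tau>) * (4 * \<tau> * exp (C * \<tau>) + \<beta> * (1 - exp (-2 * \<tau>))) + C
      \<le> \<psi> (Delta0 N \<tau> x0
             + (Zs \<sigma> K - (1 + \<sigma>) * (Zs \<sigma> (K - 1) + 1)) * Delta0 N \<tau> v0
             + exp (C * \<tau>) / C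
                 * (1 + exp (2 * \<tau> + C * \<sigma>) / \<beta> + exp (C * \<tau>) * (\<tau> - \<sigma>))
                 * (Zs \<sigma> K + Zs \<sigma> (K - 1) * \<beta> * (1 - (1 + 2 * \<tau>) * exp (-2 * \<tau>)))
                 * Delta0 N \<tau> v0)"
  shows "bdd_above (dX N x ` {0..})
       \<and> ((\<lambda>t. dX N v t) \<longlongrightarrow> 0) at_top
       \<and> (\<exists>A>0. \<forall>t\<ge>0. dX N v t \<le> A * exp (- C * t))"
proof -
  interpret delayed_cucker_smale N \<sigma> \<tau> \<psi> x v
    using N sig psi_cont psi_mono psi_pos psi_le1 x_deriv v_cont v_deriv by unfold_locales
  have "Delta0 N \<tau> x0 = Dx" "Delta0 N \<tau> v0 = Dv"
    using init_x init_v by (auto intro!: Delta0_cong)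
  note cond = Ccond[unfolded this]
  have "2 \<le> K"
    unfolding K_def by (rule two_le_Least_mult_ge[OF sig])
  note Zs = Zs_coefficient_bounds[OF sig(1) this]
  note bounds = flocking_condition_bounds[where \<psi> = \<psi>,
      OF sig beta(1) Cpos Dx_nonneg Dv_nonneg Zs(3,1,2) psi_le1 cond]
  define G where "G = exp (C * \<tau>) / (1 - (\<tau> - \<sigma>) * exp (C * \<tau>))"
  obtain B P where "(\<tau> - \<sigma>) * exp (C * \<tau>) < 1"
    and "Dv * (1 + 2 * \<tau> / (1 - (\<tau> - \<sigma>))) < B * exp (- C * \<tau>)"
    and "Dx + (1 + (\<tau> - \<sigma>) * G) * exp (C * (\<tau> - \<sigma>)) * B / C \<le> P"
    and "C + 2 * (\<tau> + \<sigma>) * G * exp (C * \<tau>) < \<psi> P"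
    by (rule barrier_parameters[OF sig bounds(1) Cpos bounds(2) Dv_nonneg bounds(3) psi_cont
          bounds(4,5), folded G_def])
  then interpret delayed_cucker_smale_barrier N \<sigma> \<tau> \<psi> x v C B P "\<tau> - \<sigma>" G
    using Cpos G_def by unfold_locales auto
  show ?thesis
    using flocking by simp
qed

end
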